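(* Let $S$ be an investment strategy with parameter space $\mathbb W=\mathcal W_k^\ell$ ($k\ge2$, $\ell\ge1$) on a market with $m$ assets. Fix $\varepsilon\in(0,1)$ and suppose $S$ satisfies condition $(\mathrm L_\varepsilon)$ and condition $(\mathrm D_c)$ for some constant $c>0$. Then $\mathcal U(S)$ is a universalization of $S$.
   Context: Let $m\ge2$. A market sequence is a sequence of return vectors $\mathbf x_0,\mathbf x_1,\dots\in(0,\infty)^m$. For $k\ge2$ let $\mathcal W_k=\{\mathbf w\in[0,1]^k:\sum_{i=1}^k w_i=1\}$. An investment strategy $S$ with parameter space $\mathbb W=\mathcal W_k^\ell$ (elements written $\mathbf w=(\mathbf w_1,\dots,\mathbf w_\ell)$, $\mathbf w_\iota=(w_{\iota1},\dots,w_{\iota k})$) assigns to every day $t\ge0$ and $\mathbf w\in\mathbb W$ an investment description $S_t(\mathbf w)=(S_{t1}(\mathbf w),\dots,S_{tm}(\mathbf w))\in\mathcal W_m$ (it may depend on market data observed before day $t$), measurable in $\mathbf w$. Its cumulative return is $\mathcal R_n(\mathbf w)=\mathcal R_n(S(\mathbf w))=\prod_{t=0}^{n-1}S_t(\mathbf w)\cdot\mathbf x_t$ (with $\mathcal R_0\equiv1$), and $\mathcal L_n(S(\mathbf w))=\frac1n\log\mathcal R_n(\mathbf w)$. For a parameter-free strategy $U$ with descriptions $U_t\in\mathcal W_m$, $\mathcal R_n(U)=\prod_{t=0}^{n-1}U_t\cdot\mathbf x_t$ and $\mathcal L_n(U)=\frac1n\log\mathcal R_n(U)$. $\mu$ denotes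 the uniform probability measure on $\mathbb W$ (normalized product of $(k-1)$-dimensional Lebesgue measure on each factor $\mathcal W_k$). The universalization $\mathcal U(S)$ is the parameter-free strategy with $\mathcal U_t(S)=\dfrac{\int_{\mathbb W}S_t(\mathbf w)\mathcal R_t(\mathbf w)\,d\mu(\mathbf w)}{\int_{\mathbb W}\mathcal R_t(\mathbf w)\,d\mu(\mathbf w)}$. A parameter-free strategy $U$ is a universalization of $S$ if there is a sequence $\eta_n\to0$, not depending on the market data, such that $\mathcal L_n(U)\ge\sup_{\mathbf w\in\mathbb W}\mathcal L_n(S(\mathbf w))-\eta_n$ for all $n\ge1$ and all market sequences. Condition $(\mathrm L_\varepsilon)$: $S_{ti}(\mathbf w)\ge\frac{\varepsilon}{2m(t+1)^2}$ for all $t\ge0$, $1\le i\le m$, $\mathbf w\in\mathbb W$. Condition $(\mathrm D_c)$: for all $t\ge0$, $1\le i\le m$ and $\mathbf w,\mathbf w'\in\mathbb W$, $|S_{ti}(\mathbf w)-S_{ti}(\mathbf w')|\le c(t+1)\sum_{\iota=1}^\ell\sum_{j=1}^{k-1}|w_{\iota j}-w'_{\iota j}|$ (this holds in particular if each $S_{ti}$ is differentiable in the free coordinates $w_{\iota j}$, $j\le k-1$, where $w_{\iota k}=1-\sum_{j<k}w_{\iota j}$, with all partial derivatives bounded in absolute value by $c(t+1)$). *)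

theory Defs
  imports "HOL-Analysis.Analysis"
begin

text \<open>Assets are indexed by i < m, days by t :: nat.
A market sequence is x :: nat => nat => real, x t i being the return of asset i on day t.
A parameter w in W = W_k^l is a function w :: nat => nat => real with w iota j the j-th
coordinate of the iota-th simplex factor (iota < l, j < k), extended by 0 outside the index range.
A strategy is S :: nat => market => parameter => nat => real, S t x w i = S_{ti}(w) on market x.\<close>

definition market :: "nat \<Rightarrow> (nat \<Rightarrow> nat \<Rightarrow> real) \<Rightarrow> bool" where
  "market m x \<longleftrightarrow> (\<forall>t. \<forall>i<m. x t i > 0)"

definition Wpar :: "nat \<Rightarrow> nat \<Rightarrow> (nat \<Rightarrow> nat \<Rightarrow> real) set" where
  "Wpar k l = {w. (\<forall>\<iota> j. \<not> (\<iota> < l \<and> j < k) \<longrightarrow> w \<iota> j = 0) \<and>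
      (\<forall>\<iota><l. (\<forall>j<k. 0 \<le> w \<iota> j \<and> w \<iota> j \<le> 1) \<and> (\<Sum>j<k. w \<iota> j) = 1)}"

text \<open>Free coordinates (w_{iota j}, j < k-1) and the map back to the parameter space.\<close>
definition free_space :: "nat \<Rightarrow> nat \<Rightarrow> (nat \<times> nat \<Rightarrow> real) measure" where
  "free_space k l = PiM ({..<l} \<times> {..<k-1}) (\<lambda>_. lborel)"

definition free_simplex :: "nat \<Rightarrow> nat \<Rightarrow> (nat \<times> nat \<Rightarrow> real) set" where
  "free_simplex k l = {v \<in> space (free_space k l).
      \<forall>\<iota><l. (\<forall>j<k-1. 0 \<le> v (\<iota>, j)) \<and> (\<Sum>j<k-1. v (\<iota>, j)) \<le> 1}"

definition free_lift :: "nat \<Rightarrow> nat \<Rightarrow> (nat \<times> nat \<Rightarrow> real) \<Rightarrow> nat \<Rightarrow> nat \<Rightarrow> real" where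
  "free_lift k l v = (\<lambda>\<iota> j. if \<iota> < l \<and> j < k - 1 then v (\<iota>, j)
       else if \<iota> < l \<and> j = k - 1 then 1 - (\<Sum>j'<k-1. v (\<iota>, j')) else 0)"

text \<open>The uniform probability measure mu on W, represented on the free coordinates:
normalized Lebesgue measure on the product of the projected simplices.\<close>
definition mu_free :: "nat \<Rightarrow> nat \<Rightarrow> (nat \<times> nat \<Rightarrow> real) measure" where
  "mu_free k l = uniform_measure (free_space k l) (free_simplex k l)"

definition W_integral :: "nat \<Rightarrow> nat \<Rightarrow> ((nat \<Rightarrow> nat \<Rightarrow> real) \<Rightarrow> real) \<Rightarrow> real" where
  "W_integral k l f = (\<integral>v. f (free_lift k l v) \<partial>mu_free k l)"

definition strategy ::
  "nat \<Rightarrow> nat \<Rightarrow> nat \<Rightarrow> (nat \<Rightarrow> (nat \<Rightarrow> nat \<Rightarrow> real) \<Rightarrow> (nat \<Rightarrow> nat \<Rightarrow> real) \<Rightarrow> nat \<Rightarrow> real) \<Rightarrow> bool"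
  where
  "strategy m k l S \<longleftrightarrow>
     (\<forall>t x w. market m x \<and> w \<in> Wpar k l \<longrightarrow>
        (\<forall>i<m. 0 \<le> S t x w i) \<and> (\<Sum>i<m. S t x w i) = 1) \<and>
     (\<forall>t x x' w. market m x \<and> market m x' \<and> w \<in> Wpar k l \<and> (\<forall>s<t. \<forall>i<m. x s i = x' s i)
        \<longrightarrow> (\<forall>i<m. S t x w i = S t x' w i)) \<and>
     (\<forall>t x i. market m x \<and> i < m \<longrightarrow>
        (\<lambda>v. S t x (free_lift k l v) i) \<in> borel_measurable (free_space k l))"

definition ret ::
  "nat \<Rightarrow> (nat \<Rightarrow> (nat \<Rightarrow> nat \<Rightarrow> real) \<Rightarrow> (nat \<Rightarrow> nat \<Rightarrow> real) \<Rightarrow> nat \<Rightarrow> real)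
     \<Rightarrow> (nat \<Rightarrow> nat \<Rightarrow> real) \<Rightarrow> (nat \<Rightarrow> nat \<Rightarrow> real) \<Rightarrow> nat \<Rightarrow> real" where
  "ret m S x w n = (\<Prod>t<n. \<Sum>i<m. S t x w i * x t i)"

text \<open>Parameter-free strategy U: U x t i is U_{ti} on market x.\<close>
definition ret_pf ::
  "nat \<Rightarrow> ((nat \<Rightarrow> nat \<Rightarrow> real) \<Rightarrow> nat \<Rightarrow> nat \<Rightarrow> real) \<Rightarrow> (nat \<Rightarrow> nat \<Rightarrow> real) \<Rightarrow> nat \<Rightarrow> real" where
  "ret_pf m U x n = (\<Prod>t<n. \<Sum>i<m. U x t i * x t i)"

definition universal ::
  "nat \<Rightarrow> nat \<Rightarrow> nat \<Rightarrow> (nat \<Rightarrow> (nat \<Rightarrow> nat \<Rightarrow> real) \<Rightarrow> (nat \<Rightarrow> nat \<Rightarrow> real) \<Rightarrow> nat \<Rightarrow> real)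
     \<Rightarrow> (nat \<Rightarrow> nat \<Rightarrow> real) \<Rightarrow> nat \<Rightarrow> nat \<Rightarrow> real" where
  "universal m k l S x t i =
     W_integral k l (\<lambda>w. S t x w i * ret m S x w t) / W_integral k l (\<lambda>w. ret m S x w t)"

definition is_universalization ::
  "nat \<Rightarrow> nat \<Rightarrow> nat \<Rightarrow> (nat \<Rightarrow> (nat \<Rightarrow> nat \<Rightarrow> real) \<Rightarrow> (nat \<Rightarrow> nat \<Rightarrow> real) \<Rightarrow> nat \<Rightarrow> real)
     \<Rightarrow> ((nat \<Rightarrow> nat \<Rightarrow> real) \<Rightarrow> nat \<Rightarrow> nat \<Rightarrow> real) \<Rightarrow> bool" where
  "is_universalization m k l S U \<longleftrightarrow>
     (\<exists>\<eta> :: nat \<Rightarrow> real. \<eta> \<longlonglongrightarrow> 0 \<and>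
        (\<forall>n\<ge>1. \<forall>x. market m x \<longrightarrow>
           ln (ret_pf m U x n) / real n \<ge>
             (SUP w\<in>Wpar k l. ln (ret m S x w n) / real n) - \<eta> n))"

definition cond_L ::
  "nat \<Rightarrow> nat \<Rightarrow> nat \<Rightarrow> real \<Rightarrow> (nat \<Rightarrow> (nat \<Rightarrow> nat \<Rightarrow> real) \<Rightarrow> (nat \<Rightarrow> nat \<Rightarrow> real) \<Rightarrow> nat \<Rightarrow> real) \<Rightarrow> bool" where
  "cond_L m k l \<epsilon> S \<longleftrightarrow> (\<forall>t x w i. market m x \<and> w \<in> Wpar k l \<and> i < m \<longrightarrow>
      S t x w i \<ge> \<epsilon> / (2 * real m * (real t + 1)^2))"

definition cond_D ::
  "nat \<Rightarrow> nat \<Rightarrow> nat \<Rightarrow> real \<Rightarrow> (nat \<Rightarrow> (nat \<Rightarrow> nat \<Rightarrow> real) \<Rightarrow> (nat \<Rightarrow> nat \<Rightarrow> real) \<Rightarrow> nat \<Rightarrow> real) \<Rightarrow> bool" where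
  "cond_D m k l c S \<longleftrightarrow> (\<forall>t x w w' i. market m x \<and> w \<in> Wpar k l \<and> w' \<in> Wpar k l \<and> i < m \<longrightarrow>
      \<bar>S t x w i - S t x w' i\<bar> \<le> c * (real t + 1) * (\<Sum>\<iota><l. \<Sum>j<k-1. \<bar>w \<iota> j - w' \<iota> j\<bar>))"

end

theory Submission
  imports Defs "HOL-Probability.Probability_Measure" "HOL-Real_Asymp.Real_Asymp"
begin

text \<open>The wealth of the universal strategy telescopes to the mu-average of the wealths R_n(w)
of all parameters w. Fix a parameter w*. For every w within l1-distance eps/(4 m c n^4) of w*,
condition (D_c) gives S_ti(w) >= S_ti(w*) - eps/(4 m n^3), which condition (L_eps) turns into
S_ti(w) >= (1 - 1/(2n)) S_ti(w*) for t < n; hence R_n(w) >= R_n(w*)/2 by Bernoulli's inequality.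
These w contain a cube of mu-measure polynomial in 1/n, so log R_n(U) >= log R_n(w*) - O(log n),
a loss of O(log n / n) per day.\<close>

section \<open>The parameter simplex and its uniform measure\<close>

definition free_dist :: "nat \<Rightarrow> nat \<Rightarrow> (nat \<Rightarrow> nat \<Rightarrow> real) \<Rightarrow> (nat \<Rightarrow> nat \<Rightarrow> real) \<Rightarrow> real" where
  "free_dist k l w w' = (\<Sum>\<iota><l. \<Sum>j<k-1. \<bar>w \<iota> j - w' \<iota> j\<bar>)"

lemma WparD:
  assumes "w \<in> Wpar k l" "\<iota> < l"
  shows "\<And>j. j < k \<Longrightarrow> 0 \<le> w \<iota> j" "\<And>j. j < k \<Longrightarrow> w \<iota> j \<le> 1"
    and "(\<Sum>j<k-1. w \<iota> j) \<le> 1"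
proof -
  show nonneg: "\<And>j. j < k \<Longrightarrow> 0 \<le> w \<iota> j" "\<And>j. j < k \<Longrightarrow> w \<iota> j \<le> 1"
    using assms unfolding Wpar_def by auto
  have "(\<Sum>j<k-1. w \<iota> j) \<le> (\<Sum>j<k. w \<iota> j)"
    by (rule sum_mono2) (use nonneg in auto)
  then show "(\<Sum>j<k-1. w \<iota> j) \<le> 1"
    using assms unfolding Wpar_def by auto
qed

lemma Wpar_nonempty: "k \<ge> 1 \<Longrightarrow> Wpar k l \<noteq> {}"
proof -
  assume "k \<ge> 1"
  then have "(\<lambda>\<iota> j. if \<iota> < l \<and> j < k then 1 / real k else 0) \<in> Wpar k l"
    unfolding Wpar_def by auto
  then show ?thesis by blast
qed

lemma free_simplexD:
  assumes "v \<in> free_simplex k l" "\<iota> < l"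
  shows "\<And>j. j < k - 1 \<Longrightarrow> 0 \<le> v (\<iota>, j)" "\<And>j. j < k - 1 \<Longrightarrow> v (\<iota>, j) \<le> 1"
    and "0 \<le> (\<Sum>j<k-1. v (\<iota>, j))" "(\<Sum>j<k-1. v (\<iota>, j)) \<le> 1"
proof -
  show nonneg: "\<And>j. j < k - 1 \<Longrightarrow> 0 \<le> v (\<iota>, j)" and sum_le: "(\<Sum>j<k-1. v (\<iota>, j)) \<le> 1"
    using assms by (auto simp: free_simplex_def)
  show "0 \<le> (\<Sum>j<k-1. v (\<iota>, j))"
    using nonneg by (intro sum_nonneg) auto
  fix j assume "j < k - 1"
  then have "v (\<iota>, j) \<le> (\<Sum>j<k-1. v (\<iota>, j))"
    using nonneg by (intro member_le_sum) auto
  with sum_le show "v (\<iota>, j) \<le> 1" by linarith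
qed

lemma free_lift_in_Wpar:
  assumes "v \<in> free_simplex k l" "k \<ge> 2"
  shows "free_lift k l v \<in> Wpar k l"
proof -
  note v = free_simplexD[OF assms(1)]
  have sum_one: "(\<Sum>j<k. free_lift k l v \<iota> j) = 1" if "\<iota> < l" for \<iota>
  proof -
    have k: "k = Suc (k - 1)" using assms(2) by simp
    have "(\<Sum>j<k. free_lift k l v \<iota> j) = (\<Sum>j<k-1. free_lift k l v \<iota> j) + free_lift k l v \<iota> (k-1)"
      by (subst k) (simp only: sum.lessThan_Suc)
    then show ?thesis using that by (simp add: free_lift_def)
  qed
  have unit: "0 \<le> free_lift k l v \<iota> j \<and> free_lift k l v \<iota> j \<le> 1" if "\<iota> < l" "j < k" for \<iota> j
  proof (cases "j < k - 1")
    case True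
    then show ?thesis using that v by (simp add: free_lift_def)
  next
    case False
    then have "j = k - 1" using that(2) by simp
    then show ?thesis using that(1) v by (simp add: free_lift_def)
  qed
  have "free_lift k l v \<iota> j = 0" if "\<not> (\<iota> < l \<and> j < k)" for \<iota> j
    using that assms(2) by (auto simp: free_lift_def)
  with unit sum_one show ?thesis
    unfolding Wpar_def by blast
qed

lemma sets_free_simplex: "free_simplex k l \<in> sets (free_space k l)"
  unfolding free_simplex_def free_space_def by measurable

lemma emeasure_free_space_PiE_Icc:
  assumes "\<And>p. p \<in> {..<l} \<times> {..<k-1} \<Longrightarrow> a p \<le> b p"
  shows "emeasure (free_space k l) (PiE ({..<l} \<times> {..<k-1}) (\<lambda>p. {a p..b p}))
       = (\<Prod>p\<in>{..<l} \<times> {..<k-1}. ennreal (b p - a p))"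
proof -
  interpret product_sigma_finite "\<lambda>_. lborel :: real measure" by standard
  show ?thesis
    using assms unfolding free_space_def by (simp add: emeasure_PiM)
qed

lemma free_simplex_subset_unit_cube: "free_simplex k l \<subseteq> PiE ({..<l} \<times> {..<k-1}) (\<lambda>_. {0..1})"
proof
  fix v assume v: "v \<in> free_simplex k l"
  then have "v \<in> extensional ({..<l} \<times> {..<k-1})"
    by (simp add: free_simplex_def free_space_def space_PiM PiE_def)
  with free_simplexD(1,2)[OF v] show "v \<in> PiE ({..<l} \<times> {..<k-1}) (\<lambda>_. {0..1})"
    by (auto simp: PiE_def)
qed

lemma emeasure_free_simplex_le_1: "emeasure (free_space k l) (free_simplex k l) \<le> 1"
proof -
  have "emeasure (free_space k l) (free_simplex k l)
      \<le> emeasure (free_space k l) (PiE ({..<l} \<times> {..<k-1}) (\<lambda>_. {0..1}))"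
    by (rule emeasure_mono[OF free_simplex_subset_unit_cube])
       (simp add: free_space_def sets_PiM_I_finite)
  also have "\<dots> = 1"
    by (subst emeasure_free_space_PiE_Icc) auto
  finally show ?thesis .
qed

text \<open>Shrinking w by the factor 1 - theta leaves room for a cube of side theta/k inside the simplex.\<close>
definition simplex_cube :: "nat \<Rightarrow> nat \<Rightarrow> real \<Rightarrow> (nat \<Rightarrow> nat \<Rightarrow> real) \<Rightarrow> (nat \<times> nat \<Rightarrow> real) set"
  where "simplex_cube k l \<theta> w = PiE ({..<l} \<times> {..<k-1})
     (\<lambda>p. {(1 - \<theta>) * w (fst p) (snd p) .. (1 - \<theta>) * w (fst p) (snd p) + \<theta> / real k})"

lemma simplex_cubeD:
  assumes "v \<in> simplex_cube k l \<theta> w" "\<iota> < l" "j < k - 1"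
  shows "(1 - \<theta>) * w \<iota> j \<le> v (\<iota>, j)" "v (\<iota>, j) \<le> (1 - \<theta>) * w \<iota> j + \<theta> / real k"
  using assms unfolding simplex_cube_def by (auto simp: PiE_iff)

lemma sets_simplex_cube: "simplex_cube k l \<theta> w \<in> sets (free_space k l)"
  unfolding simplex_cube_def free_space_def by (rule sets_PiM_I_finite) auto

lemma emeasure_simplex_cube:
  assumes "0 \<le> \<theta>"
  shows "emeasure (free_space k l) (simplex_cube k l \<theta> w) = ennreal ((\<theta> / real k) ^ (l * (k - 1)))"
proof -
  have "emeasure (free_space k l) (simplex_cube k l \<theta> w)
      = (\<Prod>p\<in>{..<l} \<times> {..<k-1}. ennreal (\<theta> / real k))"
    unfolding simplex_cube_def using assms
    by (subst emeasure_free_space_PiE_Icc) (auto simp: case_prod_beta)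
  also have "\<dots> = ennreal ((\<theta> / real k) ^ (l * (k - 1)))"
    using assms by (simp add: ennreal_power card_cartesian_product)
  finally show ?thesis .
qed

lemma measure_simplex_cube:
  "0 \<le> \<theta> \<Longrightarrow> measure (free_space k l) (simplex_cube k l \<theta> w) = (\<theta> / real k) ^ (l * (k - 1))"
  by (intro measure_eq_emeasure_eq_ennreal emeasure_simplex_cube) auto

lemma simplex_cube_subset_free_simplex:
  assumes "w \<in> Wpar k l" "k \<ge> 2" "0 < \<theta>" "\<theta> \<le> 1"
  shows "simplex_cube k l \<theta> w \<subseteq> free_simplex k l"
proof
  fix v assume v: "v \<in> simplex_cube k l \<theta> w"
  have "v \<in> space (free_space k l)"
    using v unfolding simplex_cube_def free_space_def by (auto simp: space_PiM PiE_iff)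
  moreover have "0 \<le> v (\<iota>, j)" if "\<iota> < l" "j < k - 1" for \<iota> j
  proof -
    have "0 \<le> (1 - \<theta>) * w \<iota> j"
      using WparD(1)[OF assms(1) that(1), of j] that(2) assms(4) by simp
    then show ?thesis using simplex_cubeD(1)[OF v that] by linarith
  qed
  moreover have "(\<Sum>j<k-1. v (\<iota>, j)) \<le> 1" if "\<iota> < l" for \<iota>
  proof -
    have "(\<Sum>j<k-1. v (\<iota>, j)) \<le> (\<Sum>j<k-1. (1 - \<theta>) * w \<iota> j + \<theta> / real k)"
      using simplex_cubeD(2)[OF v that] by (intro sum_mono) auto
    also have "\<dots> = (1 - \<theta>) * (\<Sum>j<k-1. w \<iota> j) + real (k - 1) * \<theta> / real k"
      by (simp add: sum.distrib sum_distrib_left)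
    also have "\<dots> \<le> (1 - \<theta>) * 1 + \<theta>"
    proof (rule add_mono)
      show "(1 - \<theta>) * (\<Sum>j<k-1. w \<iota> j) \<le> (1 - \<theta>) * 1"
        using WparD(3)[OF assms(1) that] assms(4) by (intro mult_left_mono) auto
      show "real (k - 1) * \<theta> / real k \<le> \<theta>"
        using assms(2,3) by (simp add: divide_le_eq)
    qed
    finally show ?thesis by simp
  qed
  ultimately show "v \<in> free_simplex k l" unfolding free_simplex_def by auto
qed

lemma free_dist_simplex_cube:
  assumes "v \<in> simplex_cube k l \<theta> w" "w \<in> Wpar k l" "0 \<le> \<theta>"
  shows "free_dist k l (free_lift k l v) w \<le> real (l * (k - 1)) * \<theta>"
proof -
  have "\<bar>free_lift k l v \<iota> j - w \<iota> j\<bar> \<le> \<theta>" if "\<iota> < l" "j < k - 1" for \<iota> j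
  proof -
    have "0 \<le> w \<iota> j" "w \<iota> j \<le> 1"
      using WparD[OF assms(2) that(1)] that(2) by auto
    then have "0 \<le> \<theta> * w \<iota> j" "\<theta> * w \<iota> j \<le> \<theta>"
      using assms(3) by (auto simp: mult_left_le)
    moreover have "\<theta> / real k \<le> \<theta>"
      using that(2) assms(3) by (simp add: divide_le_eq mult_le_cancel_left1)
    ultimately show ?thesis
      using simplex_cubeD[OF assms(1) that] that
      by (simp add: free_lift_def abs_le_iff algebra_simps)
  qed
  then have "free_dist k l (free_lift k l v) w \<le> (\<Sum>\<iota><l. \<Sum>j<k-1. \<theta>)"
    unfolding free_dist_def by (intro sum_mono) auto
  then show ?thesis by simp
qed

lemma emeasure_free_simplex_pos:
  assumes "k \<ge> 2"
  shows "0 < emeasure (free_space k l) (free_simplex k l)"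
proof -
  obtain w where "w \<in> Wpar k l" using Wpar_nonempty[of k l] assms by auto
  then have "emeasure (free_space k l) (simplex_cube k l 1 w) \<le> emeasure (free_space k l) (free_simplex k l)"
    using assms by (intro emeasure_mono simplex_cube_subset_free_simplex sets_free_simplex) simp_all
  moreover have "0 < emeasure (free_space k l) (simplex_cube k l 1 w)"
    using assms by (simp add: emeasure_simplex_cube)
  ultimately show ?thesis by (rule order.strict_trans2[rotated])
qed

lemma prob_space_mu_free: "k \<ge> 2 \<Longrightarrow> prob_space (mu_free k l)"
  unfolding mu_free_def
  using emeasure_free_simplex_pos[of k l] emeasure_free_simplex_le_1[of k l]
  by (intro prob_space_uniform_measure sets_free_simplex)
     (auto simp: neq_top_trans[OF ennreal_one_neq_top])

lemma AE_mu_free: "(\<And>v. v \<in> free_simplex k l \<Longrightarrow> P v) \<Longrightarrow> AE v in mu_free k l. P v"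
  unfolding mu_free_def by (intro AE_uniform_measureI sets_free_simplex) auto

lemma integrable_mu_free:
  fixes f :: "(nat \<times> nat \<Rightarrow> real) \<Rightarrow> real"
  assumes "k \<ge> 2" "f \<in> borel_measurable (free_space k l)"
    and "\<And>v. v \<in> free_simplex k l \<Longrightarrow> \<bar>f v\<bar> \<le> B"
  shows "integrable (mu_free k l) f"
proof -
  interpret prob_space "mu_free k l" using assms(1) by (rule prob_space_mu_free)
  show ?thesis
    using assms(2,3) by (intro integrable_const_bound[where B=B] AE_mu_free) (auto simp: mu_free_def)
qed

lemma measure_mu_free_ge:
  assumes "k \<ge> 2" "C \<in> sets (free_space k l)" "C \<subseteq> free_simplex k l"
  shows "measure (free_space k l) C \<le> measure (mu_free k l) C"
proof -
  let ?vol = "measure (free_space k l) (free_simplex k l)"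
  have finite: "emeasure (free_space k l) (free_simplex k l) \<noteq> \<infinity>"
    using emeasure_free_simplex_le_1[of k l] by (auto simp: neq_top_trans[OF ennreal_one_neq_top])
  have pos: "emeasure (free_space k l) (free_simplex k l) \<noteq> 0"
    using emeasure_free_simplex_pos[OF assms(1), of l] by auto
  have "measure (mu_free k l) C = measure (free_space k l) C / ?vol"
    unfolding mu_free_def using assms finite pos by (simp add: Int_absorb1)
  moreover have "?vol \<le> 1"
    using emeasure_free_simplex_le_1 finite by (simp add: measure_def enn2real_leI)
  moreover have "0 < ?vol"
    using finite pos by (simp add: emeasure_eq_ennreal_measure measure_nonneg order_less_le)
  ultimately show ?thesis
    by (simp add: le_divide_eq measure_nonneg mult_left_le)
qed

lemma W_integral_ge_near:
  fixes f :: "(nat \<Rightarrow> nat \<Rightarrow> real) \<Rightarrow> real"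
  assumes "k \<ge> 2" "0 < \<theta>" "\<theta> \<le> 1" "w \<in> Wpar k l" "0 \<le> a"
    and meas: "(\<lambda>v. f (free_lift k l v)) \<in> borel_measurable (free_space k l)"
    and bounds: "\<And>w'. w' \<in> Wpar k l \<Longrightarrow> 0 \<le> f w' \<and> f w' \<le> B"
    and near: "\<And>w'. w' \<in> Wpar k l \<Longrightarrow> free_dist k l w' w \<le> real (l * (k - 1)) * \<theta> \<Longrightarrow> a \<le> f w'"
  shows "a * (\<theta> / real k) ^ (l * (k - 1)) \<le> W_integral k l f"
proof -
  interpret prob_space "mu_free k l" using assms(1) by (rule prob_space_mu_free)
  define C where "C = simplex_cube k l \<theta> w"
  have C_sets: "C \<in> sets (free_space k l)"
    unfolding C_def by (rule sets_simplex_cube)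
  have C_sub: "C \<subseteq> free_simplex k l"
    unfolding C_def using assms by (intro simplex_cube_subset_free_simplex) auto
  then have C_space: "C \<inter> space (mu_free k l) = C"
    unfolding mu_free_def free_simplex_def by auto
  have "a * (\<theta> / real k) ^ (l * (k - 1)) \<le> a * measure (mu_free k l) C"
    using measure_simplex_cube[of \<theta> k l w] measure_mu_free_ge[OF assms(1) C_sets C_sub] assms(2,5)
    unfolding C_def by (intro mult_left_mono) auto
  also have "\<dots> = (\<integral>v. a * indicator C v \<partial>mu_free k l)"
    using C_space by simp
  also have "\<dots> \<le> (\<integral>v. f (free_lift k l v) \<partial>mu_free k l)"
  proof (rule integral_mono_AE)
    show "integrable (mu_free k l) (\<lambda>v. a * indicator C v)"
      using C_sets assms(1,5) by (intro integrable_mu_free[where B=a]) (auto simp: indicator_def)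
    show "integrable (mu_free k l) (\<lambda>v. f (free_lift k l v))"
      using assms(1) meas bounds free_lift_in_Wpar by (intro integrable_mu_free[where B=B]) force+
    show "AE v in mu_free k l. a * indicator C v \<le> f (free_lift k l v)"
    proof (rule AE_mu_free)
      fix v assume "v \<in> free_simplex k l"
      then have "free_lift k l v \<in> Wpar k l" using assms(1) by (rule free_lift_in_Wpar)
      then show "a * indicator C v \<le> f (free_lift k l v)"
        using bounds near free_dist_simplex_cube[of v k l \<theta> w] assms(2,4)
        unfolding C_def by (auto simp: indicator_def)
    qed
  qed
  finally show ?thesis unfolding W_integral_def .
qed

section \<open>Wealth of a strategy\<close>

lemma strategyD:
  assumes "strategy m k l S" "market m x" "w \<in> Wpar k l"
  shows "\<And>i. i < m \<Longrightarrow> 0 \<le> S t x w i" "(\<Sum>i<m. S t x w i) = 1"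
  using assms unfolding strategy_def by blast+

lemma strategy_le_1:
  assumes "strategy m k l S" "market m x" "w \<in> Wpar k l" "i < m"
  shows "S t x w i \<le> 1"
  using member_le_sum[of i "{..<m}" "S t x w"] strategyD[OF assms(1-3)] assms(4) by simp

lemma strategy_measurable:
  "strategy m k l S \<Longrightarrow> market m x \<Longrightarrow> i < m
    \<Longrightarrow> (\<lambda>v. S t x (free_lift k l v) i) \<in> borel_measurable (free_space k l)"
  unfolding strategy_def by blast

lemma daily_return_bounds:
  assumes "strategy m k l S" "market m x" "w \<in> Wpar k l"
  shows "0 < Min (x t ` {..<m})"
    and "Min (x t ` {..<m}) \<le> (\<Sum>i<m. S t x w i * x t i)"
    and "(\<Sum>i<m. S t x w i * x t i) \<le> (\<Sum>i<m. x t i)"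
proof -
  have "m \<noteq> 0" using strategyD(2)[OF assms, where t=t] by (cases m) auto
  then show "0 < Min (x t ` {..<m})"
    using assms(2) by (subst Min_gr_iff) (auto simp: market_def)
  have "Min (x t ` {..<m}) = (\<Sum>i<m. S t x w i * Min (x t ` {..<m}))"
    using strategyD(2)[OF assms] by (simp add: sum_distrib_right[symmetric])
  also have "\<dots> \<le> (\<Sum>i<m. S t x w i * x t i)"
    using strategyD(1)[OF assms] by (intro sum_mono mult_left_mono) auto
  finally show "Min (x t ` {..<m}) \<le> (\<Sum>i<m. S t x w i * x t i)" .
  show "(\<Sum>i<m. S t x w i * x t i) \<le> (\<Sum>i<m. x t i)"
    using strategy_le_1[OF assms] strategyD(1)[OF assms] assms(2)
    by (intro sum_mono mult_left_le_one_le) (auto simp: market_def less_imp_le)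
qed

lemma ret_bounds:
  assumes "strategy m k l S" "market m x" "w \<in> Wpar k l"
  shows "0 < (\<Prod>s<n. Min (x s ` {..<m}))"
    and "(\<Prod>s<n. Min (x s ` {..<m})) \<le> ret m S x w n"
    and "ret m S x w n \<le> (\<Prod>s<n. \<Sum>i<m. x s i)"
proof -
  note daily = daily_return_bounds[OF assms]
  show "0 < (\<Prod>s<n. Min (x s ` {..<m}))"
    using daily(1) by (rule prod_pos)
  show "(\<Prod>s<n. Min (x s ` {..<m})) \<le> ret m S x w n"
    unfolding ret_def using daily(1,2) by (intro prod_mono) (simp add: less_imp_le)
  show "ret m S x w n \<le> (\<Prod>s<n. \<Sum>i<m. x s i)"
    unfolding ret_def using daily(1,2,3) by (intro prod_mono conjI) (auto intro: order.trans[OF less_imp_le])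
qed

lemma ret_pos:
  "strategy m k l S \<Longrightarrow> market m x \<Longrightarrow> w \<in> Wpar k l \<Longrightarrow> 0 < ret m S x w n"
  using ret_bounds(1,2) by (rule order.strict_trans2)

lemma ret_Suc: "ret m S x w (Suc t) = (\<Sum>i<m. S t x w i * ret m S x w t * x t i)"
  unfolding ret_def prod.lessThan_Suc sum_distrib_left by (simp add: ac_simps)

lemma ret_measurable:
  "strategy m k l S \<Longrightarrow> market m x
    \<Longrightarrow> (\<lambda>v. ret m S x (free_lift k l v) n) \<in> borel_measurable (free_space k l)"
  unfolding ret_def using strategy_measurable by measurable

section \<open>Wealth of the universalization\<close>

lemma W_integral_ret_Suc:
  assumes "k \<ge> 2" "strategy m k l S" "market m x"
  shows "W_integral k l (\<lambda>w. ret m S x w (Suc t))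
       = (\<Sum>i<m. W_integral k l (\<lambda>w. S t x w i * ret m S x w t) * x t i)"
proof -
  let ?S = "\<lambda>i v. S t x (free_lift k l v) i" and ?R = "\<lambda>v. ret m S x (free_lift k l v) t"
  have integrable: "integrable (mu_free k l) (\<lambda>v. ?S i v * ?R v * x t i)" if i: "i < m" for i
  proof (rule integrable_mu_free[OF assms(1), where B = "(\<Prod>s<t. \<Sum>i<m. x s i) * x t i"])
    show "(\<lambda>v. ?S i v * ?R v * x t i) \<in> borel_measurable (free_space k l)"
      using strategy_measurable[OF assms(2,3) i] ret_measurable[OF assms(2,3)] by measurable
    fix v assume "v \<in> free_simplex k l"
    then have w: "free_lift k l v \<in> Wpar k l" using assms(1) by (rule free_lift_in_Wpar)
    have "0 \<le> ?S i v" "?S i v \<le> 1"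
      using strategyD(1)[OF assms(2,3) w] strategy_le_1[OF assms(2,3) w] i by auto
    moreover have "0 \<le> ?R v" "?R v \<le> (\<Prod>s<t. \<Sum>i<m. x s i)"
      using ret_bounds[OF assms(2,3) w, of t] by auto
    moreover have "0 < x t i" using assms(3) i by (simp add: market_def)
    ultimately show "\<bar>?S i v * ?R v * x t i\<bar> \<le> (\<Prod>s<t. \<Sum>i<m. x s i) * x t i"
      by (simp add: abs_mult mult_right_mono order_trans[OF mult_left_le_one_le])
  qed
  have "W_integral k l (\<lambda>w. ret m S x w (Suc t)) = (\<integral>v. (\<Sum>i<m. ?S i v * ?R v * x t i) \<partial>mu_free k l)"
    unfolding W_integral_def ret_Suc ..
  also have "\<dots> = (\<Sum>i<m. (\<integral>v. ?S i v * ?R v * x t i \<partial>mu_free k l))"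
    using integrable by (rule Bochner_Integration.integral_sum) simp
  also have "\<dots> = (\<Sum>i<m. W_integral k l (\<lambda>w. S t x w i * ret m S x w t) * x t i)"
    unfolding W_integral_def by simp
  finally show ?thesis .
qed

lemma W_integral_ret_pos:
  assumes "k \<ge> 2" "strategy m k l S" "market m x"
  shows "0 < W_integral k l (\<lambda>w. ret m S x w n)"
proof -
  obtain w where w: "w \<in> Wpar k l" using Wpar_nonempty[of k l] assms(1) by auto
  let ?p = "\<Prod>s<n. Min (x s ` {..<m})"
  have "?p * (1 / real k) ^ (l * (k - 1)) \<le> W_integral k l (\<lambda>w. ret m S x w n)"
    using ret_bounds[OF assms(2,3)] ret_pos[OF assms(2,3)] ret_measurable[OF assms(2,3)] assms(1) w
    by (intro W_integral_ge_near[where B = "\<Prod>s<n. \<Sum>i<m. x s i"]) (auto intro: less_imp_le)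
  moreover have "0 < ?p * (1 / real k) ^ (l * (k - 1))"
    using ret_bounds(1)[OF assms(2,3) w] assms(1) by simp
  ultimately show ?thesis by linarith
qed

lemma ret_pf_universal:
  assumes "k \<ge> 2" "strategy m k l S" "market m x"
  shows "ret_pf m (universal m k l S) x n = W_integral k l (\<lambda>w. ret m S x w n)"
proof (induction n)
  case 0
  interpret prob_space "mu_free k l" using assms(1) by (rule prob_space_mu_free)
  show ?case by (simp add: ret_pf_def ret_def W_integral_def prob_space)
next
  case (Suc n)
  have "ret_pf m (universal m k l S) x (Suc n)
      = W_integral k l (\<lambda>w. ret m S x w n) * (\<Sum>i<m. universal m k l S x n i * x n i)"
    using Suc.IH by (simp add: ret_pf_def)
  also have "\<dots> = (\<Sum>i<m. W_integral k l (\<lambda>w. S n x w i * ret m S x w n) * x n i)"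
    using W_integral_ret_pos[OF assms, of n] by (simp add: universal_def sum_distrib_left)
  also have "\<dots> = W_integral k l (\<lambda>w. ret m S x w (Suc n))"
    by (rule W_integral_ret_Suc[OF assms, symmetric])
  finally show ?case .
qed

lemma strategy_ge_near:
  assumes "cond_L m k l \<epsilon> S" "cond_D m k l c S" "0 < c" "0 < \<epsilon>" "market m x"
    and "w \<in> Wpar k l" "w' \<in> Wpar k l" "i < m" "t < n"
    and near: "free_dist k l w w' \<le> \<epsilon> / (4 * real m * c * real n ^ 4)"
  shows "(1 - 1 / (2 * real n)) * S t x w' i \<le> S t x w i"
proof -
  have n: "0 < real n" "real t + 1 \<le> real n" using assms(9) by auto
  have m: "0 < real m" using assms(8) by simp
  have "\<bar>S t x w i - S t x w' i\<bar> \<le> c * (real t + 1) * free_dist k l w w'"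
    using assms unfolding cond_D_def free_dist_def by blast
  also have "\<dots> \<le> c * real n * (\<epsilon> / (4 * real m * c * real n ^ 4))"
    using n assms(3) near by (intro mult_mono) (auto simp: free_dist_def intro!: sum_nonneg)
  also have "\<dots> = 1 / (2 * real n) * (\<epsilon> / (2 * real m * real n ^ 2))"
    using n m assms(3) by (simp add: field_simps power_def)
  also have "\<dots> \<le> 1 / (2 * real n) * S t x w' i"
  proof (rule mult_left_mono)
    have "\<epsilon> / (2 * real m * real n ^ 2) \<le> \<epsilon> / (2 * real m * (real t + 1) ^ 2)"
      using n m assms(4) by (intro divide_left_mono mult_left_mono power_mono mult_pos_pos) auto
    also have "\<dots> \<le> S t x w' i"
      using assms unfolding cond_L_def by blast
    finally show "\<epsilon> / (2 * real m * real n ^ 2) \<le> S t x w' i" .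
  qed (use n in simp)
  finally show ?thesis by (simp add: algebra_simps abs_le_iff)
qed

lemma ret_ge_half_near:
  assumes "strategy m k l S" "cond_L m k l \<epsilon> S" "cond_D m k l c S" "0 < c" "0 < \<epsilon>" "market m x"
    and "w \<in> Wpar k l" "w' \<in> Wpar k l" "1 \<le> n"
    and near: "free_dist k l w w' \<le> \<epsilon> / (4 * real m * c * real n ^ 4)"
  shows "ret m S x w' n / 2 \<le> ret m S x w n"
proof -
  let ?q = "1 - 1 / (2 * real n)"
  have "1 / 2 \<le> ?q ^ n"
    using Bernoulli_inequality[of "- 1 / (2 * real n)" n] assms(9) by simp
  then have "ret m S x w' n / 2 \<le> ?q ^ n * ret m S x w' n"
    using ret_pos[OF assms(1,6,8)] by (simp add: mult_right_mono[of "1/2" _ "ret m S x w' n", simplified])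
  also have "\<dots> = (\<Prod>t<n. ?q * (\<Sum>i<m. S t x w' i * x t i))"
    unfolding ret_def by (simp add: prod.distrib)
  also have "\<dots> \<le> ret m S x w n"
    unfolding ret_def
  proof (intro prod_mono conjI)
    fix t assume t: "t \<in> {..<n}"
    have "0 \<le> ?q" using assms(9) by simp
    then show "0 \<le> ?q * (\<Sum>i<m. S t x w' i * x t i)"
      using strategyD(1)[OF assms(1,6,8)] assms(6)
      by (intro mult_nonneg_nonneg sum_nonneg) (auto simp: market_def less_imp_le)
    have daily: "?q * S t x w' i * x t i \<le> S t x w i * x t i" if "i < m" for i
      using strategy_ge_near[OF assms(2-8) that _ near] t assms(6) that
      by (intro mult_right_mono) (auto simp: market_def less_imp_le)
    show "?q * (\<Sum>i<m. S t x w' i * x t i) \<le> (\<Sum>i<m. S t x w i * x t i)"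
      unfolding sum_distrib_left by (rule sum_mono) (use daily in \<open>simp add: mult.assoc\<close>)
  qed
  finally show ?thesis .
qed

lemma ret_pf_universal_ge:
  assumes "k \<ge> 2" "strategy m k l S" "cond_L m k l \<epsilon> S" "cond_D m k l c S" "0 < c" "0 < \<epsilon>"
    and "market m x" "1 \<le> n" "w \<in> Wpar k l" "0 < \<theta>" "\<theta> \<le> 1"
    and \<theta>: "real (l * (k - 1)) * \<theta> \<le> \<epsilon> / (4 * real m * c * real n ^ 4)"
  shows "ret m S x w n / 2 * (\<theta> / real k) ^ (l * (k - 1)) \<le> ret_pf m (universal m k l S) x n"
  unfolding ret_pf_universal[OF assms(1,2,7)]
proof (rule W_integral_ge_near[where B = "\<Prod>s<n. \<Sum>i<m. x s i"])
  fix w' assume w': "w' \<in> Wpar k l" and "free_dist k l w' w \<le> real (l * (k - 1)) * \<theta>"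
  with \<theta> show "ret m S x w n / 2 \<le> ret m S x w' n"
    by (intro ret_ge_half_near[OF assms(2-7) w' assms(9,8)]) linarith
qed (use assms ret_pos[OF assms(2,7)] ret_bounds(3)[OF assms(2,7)] ret_measurable[OF assms(2,7)]
     in \<open>auto intro: less_imp_le\<close>)

lemma log_wealth_universal_ge:
  assumes "k \<ge> 2" "strategy m k l S" "cond_L m k l \<epsilon> S" "cond_D m k l c S" "0 < c" "0 < \<epsilon>"
    and "market m x" "1 \<le> n" "0 < \<theta>" "\<theta> \<le> 1"
    and "real (l * (k - 1)) * \<theta> \<le> \<epsilon> / (4 * real m * c * real n ^ 4)"
  shows "(SUP w\<in>Wpar k l. ln (ret m S x w n) / real n)
           - (ln 2 + real (l * (k - 1)) * ln (real k / \<theta>)) / real n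
         \<le> ln (ret_pf m (universal m k l S) x n) / real n"
proof -
  let ?loss = "ln 2 + real (l * (k - 1)) * ln (real k / \<theta>)"
  have "Wpar k l \<noteq> {}" using Wpar_nonempty[of k l] assms(1) by simp
  moreover have "ln (ret m S x w n) / real n \<le> (ln (ret_pf m (universal m k l S) x n) + ?loss) / real n"
    if w: "w \<in> Wpar k l" for w
  proof -
    have pos: "0 < ret m S x w n / 2 * (\<theta> / real k) ^ (l * (k - 1))"
      using ret_pos[OF assms(2,7) w] assms(1,9) by simp
    have "ln (ret m S x w n) - ?loss = ln (ret m S x w n / 2 * (\<theta> / real k) ^ (l * (k - 1)))"
      using ret_pos[OF assms(2,7) w, of n] assms(1,9)
      by (simp add: ln_mult ln_div ln_realpow) (simp add: algebra_simps)
    also have "\<dots> \<le> ln (ret_pf m (universal m k l S) x n)"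
      using ret_pf_universal_ge[OF assms(1-8) w assms(9-11)] pos by simp
    finally show ?thesis
      using assms(8) by (intro divide_right_mono) auto
  qed
  ultimately have "(SUP w\<in>Wpar k l. ln (ret m S x w n) / real n)
      \<le> (ln (ret_pf m (universal m k l S) x n) + ?loss) / real n"
    by (rule cSUP_least)
  then show ?thesis by (simp add: add_divide_distrib)
qed

lemma cube_radius_bounds:
  fixes \<epsilon> c c' :: real and m N n :: nat
  assumes "1 \<le> m" "1 \<le> N" "1 \<le> n" "0 < c" "c \<le> c'" "1 \<le> c'" "0 < \<epsilon>" "\<epsilon> < 1"
  defines "\<theta> \<equiv> \<epsilon> / (4 * real m * c' * real N * real n ^ 4)"
  shows "0 < \<theta>" "\<theta> \<le> 1" "real N * \<theta> \<le> \<epsilon> / (4 * real m * c * real n ^ 4)"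
proof -
  have denom: "1 \<le> 4 * real m * c' * real N * real n ^ 4"
    using assms(1-3,6) by (intro mult_ge1_I) (auto simp: one_le_power)
  then have denom_pos: "0 < 4 * real m * c' * real N * real n ^ 4" by linarith
  show "0 < \<theta>"
    unfolding \<theta>_def using denom_pos assms(7) by (rule divide_pos_pos[rotated])
  show "\<theta> \<le> 1"
    unfolding \<theta>_def pos_divide_le_eq[OF denom_pos] using denom assms(8) by linarith
  have "real N * \<theta> = \<epsilon> / (4 * real m * c' * real n ^ 4)"
    unfolding \<theta>_def using assms(2) by simp
  also have "\<dots> \<le> \<epsilon> / (4 * real m * c * real n ^ 4)"
    using assms by (intro divide_left_mono mult_right_mono mult_left_mono) auto
  finally show "real N * \<theta> \<le> \<epsilon> / (4 * real m * c * real n ^ 4)" .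
qed

theorem theorem3p1:
  fixes m k l :: nat and \<epsilon> c :: real
    and S :: "nat \<Rightarrow> (nat \<Rightarrow> nat \<Rightarrow> real) \<Rightarrow> (nat \<Rightarrow> nat \<Rightarrow> real) \<Rightarrow> nat \<Rightarrow> real"
  assumes "m \<ge> 2" and "k \<ge> 2" and "l \<ge> 1"
    and "strategy m k l S"
    and "0 < \<epsilon>" and "\<epsilon> < 1"
    and "cond_L m k l \<epsilon> S"
    and "0 < c" and "cond_D m k l c S"
  shows "is_universalization m k l S (universal m k l S)"
proof -
  define N where "N = l * (k - 1)"
  define c' where "c' = max c 1"
  define \<theta> where "\<theta> n = \<epsilon> / (4 * real m * c' * real N * real n ^ 4)" for n :: nat
  have N: "1 \<le> N" unfolding N_def using assms(2,3) by simp
  have c': "c \<le> c'" "1 \<le> c'" unfolding c'_def by auto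
  have "(\<lambda>n. (ln 2 + real N * ln (real k / \<theta> n)) / real n) \<longlonglongrightarrow> 0"
    unfolding \<theta>_def using assms(1,2,5) N c' by real_asymp
  moreover have "(SUP w\<in>Wpar k l. ln (ret m S x w n) / real n) - (ln 2 + real N * ln (real k / \<theta> n)) / real n
      \<le> ln (ret_pf m (universal m k l S) x n) / real n" if "1 \<le> n" "market m x" for n x
    using cube_radius_bounds[of m N n c c' \<epsilon>] assms(1,5,6,8) N c' that
    unfolding \<theta>_def
    by (intro log_wealth_universal_ge[OF assms(2,4,7,9,8,5) that(2,1), folded N_def]) simp_all
  ultimately show ?thesis
    unfolding is_universalization_def by blast
qed

end
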